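(* Let $G$ be a finite connected chordal graph. Then its center $C(G)$ is a diameter certificate of $G$, i.e. for every vertex $u$, $\min_{c\in C(G)}(d(u,c)+e(c))\le\operatorname{diam}(G)$.
   Context: A graph is chordal if every induced cycle of length at least 4 has a chord. $d$ shortest-path distance, $e(v)=\max_u d(v,u)$, $\operatorname{rad}(G)=\min_v e(v)$, $\operatorname{diam}(G)=\max_v e(v)$, $C(G)=\{c: e(c)=\operatorname{rad}(G)\}$. *)

theory Defs
  imports Main
begin

definition graph :: "'a set \<Rightarrow> ('a \<Rightarrow> 'a \<Rightarrow> bool) \<Rightarrow> bool" where
  "graph V E \<longleftrightarrow> (\<forall>x y. E x y \<longrightarrow> x \<in> V \<and> y \<in> V) \<and> (\<forall>x y. E x y \<longrightarrow> E y x) \<and> (\<forall>x. \<not> E x x)"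

definition walk :: "'a set \<Rightarrow> ('a \<Rightarrow> 'a \<Rightarrow> bool) \<Rightarrow> 'a list \<Rightarrow> bool" where
  "walk V E p \<longleftrightarrow> p \<noteq> [] \<and> set p \<subseteq> V \<and> (\<forall>i. Suc i < length p \<longrightarrow> E (p ! i) (p ! Suc i))"

definition connected_graph :: "'a set \<Rightarrow> ('a \<Rightarrow> 'a \<Rightarrow> bool) \<Rightarrow> bool" where
  "connected_graph V E \<longleftrightarrow> V \<noteq> {} \<and>
     (\<forall>u\<in>V. \<forall>v\<in>V. \<exists>p. walk V E p \<and> hd p = u \<and> last p = v)"

definition dist :: "'a set \<Rightarrow> ('a \<Rightarrow> 'a \<Rightarrow> bool) \<Rightarrow> 'a \<Rightarrow> 'a \<Rightarrow> nat" where
  "dist V E u v = (LEAST n. \<exists>p. walk V E p \<and> hd p = u \<and> last p = v \<and> length p = Suc n)"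

definition ecc :: "'a set \<Rightarrow> ('a \<Rightarrow> 'a \<Rightarrow> bool) \<Rightarrow> 'a \<Rightarrow> nat" where
  "ecc V E v = Max ((\<lambda>u. dist V E v u) ` V)"

definition rad :: "'a set \<Rightarrow> ('a \<Rightarrow> 'a \<Rightarrow> bool) \<Rightarrow> nat" where
  "rad V E = Min (ecc V E ` V)"

definition diam :: "'a set \<Rightarrow> ('a \<Rightarrow> 'a \<Rightarrow> bool) \<Rightarrow> nat" where
  "diam V E = Max (ecc V E ` V)"

definition center :: "'a set \<Rightarrow> ('a \<Rightarrow> 'a \<Rightarrow> bool) \<Rightarrow> 'a set" where
  "center V E = {c \<in> V. ecc V E c = rad V E}"

definition induced_cycle :: "'a set \<Rightarrow> ('a \<Rightarrow> 'a \<Rightarrow> bool) \<Rightarrow> 'a list \<Rightarrow> bool" where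
  "induced_cycle V E cs \<longleftrightarrow> distinct cs \<and> set cs \<subseteq> V \<and>
     (\<forall>i<length cs. \<forall>j<length cs.
        E (cs ! i) (cs ! j) \<longleftrightarrow> (j = Suc i mod length cs \<or> i = Suc j mod length cs))"

definition chordal :: "'a set \<Rightarrow> ('a \<Rightarrow> 'a \<Rightarrow> bool) \<Rightarrow> bool" where
  "chordal V E \<longleftrightarrow> \<not> (\<exists>cs. length cs \<ge> 4 \<and> induced_cycle V E cs)"

end

theory Submission
  imports Defs
begin

text \<open>
  Write \<open>r\<close> for the radius and \<open>D\<close> for the diameter. If \<open>2 r \<le> D\<close>, any central vertex
  \<open>c\<close> gives \<open>d(u, c) + e(c) \<le> r + r \<le> D\<close>. Otherwise the balls \<open>B(u, D - r)\<close> and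
  \<open>B(x, r - 1)\<close>, \<open>x \<in> V\<close>, are connected and pairwise touch (they meet or are joined by an
  edge), because the distance of any two centres is at most \<open>D\<close>, which does not exceed the sum
  of the two radii plus one. In a chordal graph such a family is met by a single clique: induct
  on the number of vertices, deleting a simplicial vertex (one exists by Dirac's lemma). A vertex
  \<open>z\<close> of that clique lying in \<open>B(u, D - r)\<close> is within \<open>1 + (r - 1)\<close> of every vertex, so it is
  central and \<open>d(u, z) + e(z) \<le> (D - r) + r = D\<close>.
\<close>

lemma walk_singleton: "x \<in> V \<Longrightarrow> walk V E [x]"
  by (simp add: walk_def)

lemma walk_Cons: "walk V E (x # y # p) \<longleftrightarrow> x \<in> V \<and> E x y \<and> walk V E (y # p)"
  unfolding walk_def by (auto simp: nth_Cons split: nat.splits)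

lemma walk_subset: "walk V E p \<Longrightarrow> set p \<subseteq> W \<Longrightarrow> walk W E p"
  by (simp add: walk_def)

lemma walk_nth_adj: "walk V E p \<Longrightarrow> Suc i < length p \<Longrightarrow> E (p ! i) (p ! Suc i)"
  by (simp add: walk_def)

lemma walk_nth_in: "walk V E p \<Longrightarrow> i < length p \<Longrightarrow> p ! i \<in> V"
  by (auto simp: walk_def)

lemma walk_append:
  assumes "walk V E p" "walk V E q" "last p = hd q"
  shows "walk V E (p @ tl q)"
  using assms
proof (induction p rule: induct_list012)
  case 1
  then show ?case by (simp add: walk_def)
next
  case (2 x)
  then show ?case by (cases q) (auto simp: walk_def)
next
  case (3 x y p)
  then show ?case by (simp add: walk_Cons)
qed

lemma walk_take: "walk V E p \<Longrightarrow> 0 < n \<Longrightarrow> walk V E (take n p)"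
  unfolding walk_def by (auto dest: in_set_takeD)

lemma walk_drop: "walk V E p \<Longrightarrow> n < length p \<Longrightarrow> walk V E (drop n p)"
  unfolding walk_def by (auto dest: in_set_dropD)

lemma last_append_tl: "q \<noteq> [] \<Longrightarrow> last p = hd q \<Longrightarrow> last (p @ tl q) = last q"
  by (cases q) (auto simp: last_append)

definition reach :: "'a set \<Rightarrow> ('a \<Rightarrow> 'a \<Rightarrow> bool) \<Rightarrow> 'a \<Rightarrow> 'a \<Rightarrow> bool" where
  "reach S E x y \<longleftrightarrow> (\<exists>p. walk S E p \<and> hd p = x \<and> last p = y)"

definition connected_on :: "'a set \<Rightarrow> ('a \<Rightarrow> 'a \<Rightarrow> bool) \<Rightarrow> bool" where
  "connected_on S E \<longleftrightarrow> (\<forall>x\<in>S. \<forall>y\<in>S. reach S E x y)"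

lemma connected_graph_iff: "connected_graph V E \<longleftrightarrow> V \<noteq> {} \<and> connected_on V E"
  by (auto simp: connected_graph_def connected_on_def reach_def)

lemma reach_refl: "x \<in> S \<Longrightarrow> reach S E x x"
  unfolding reach_def by (intro exI[of _ "[x]"]) (simp add: walk_singleton)

lemma reach_edge: "x \<in> S \<Longrightarrow> y \<in> S \<Longrightarrow> E x y \<Longrightarrow> reach S E x y"
  unfolding reach_def by (intro exI[of _ "[x, y]"]) (simp add: walk_Cons walk_singleton)

lemma reach_in: "reach S E x y \<Longrightarrow> y \<in> S"
  unfolding reach_def walk_def by (metis last_in_set subsetD)

lemma reach_mono: "reach S E x y \<Longrightarrow> S \<subseteq> T \<Longrightarrow> reach T E x y"
  unfolding reach_def walk_def by blast

lemma reach_trans: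
  assumes "reach S E x y" "reach S E y z"
  shows "reach S E x z"
proof -
  obtain p q where p: "walk S E p" "hd p = x" "last p = y"
    and q: "walk S E q" "hd q = y" "last q = z"
    using assms by (auto simp: reach_def)
  have "p \<noteq> []" "q \<noteq> []" using p q by (auto simp: walk_def)
  then show ?thesis
    unfolding reach_def using p q walk_append[of S E p q]
    by (intro exI[of _ "p @ tl q"]) (simp add: last_append_tl)
qed

lemma walk_segment:
  assumes "walk S E p" "i \<le> j" "j < length p"
  shows "walk S E (take (Suc j - i) (drop i p))" "hd (take (Suc j - i) (drop i p)) = p ! i"
    "last (take (Suc j - i) (drop i p)) = p ! j"
  using assms by (auto intro!: walk_take walk_drop simp: hd_drop_conv_nth last_conv_nth nth_take)

lemma reach_nth: "walk S E p \<Longrightarrow> k < length p \<Longrightarrow> reach S E (hd p) (p ! k)"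
  unfolding reach_def
proof (intro exI conjI)
  assume w: "walk S E p" and k: "k < length p"
  show "walk S E (take (Suc k) p)" using w by (rule walk_take) simp
  show "hd (take (Suc k) p) = hd p" using k by (cases p) auto
  show "last (take (Suc k) p) = p ! k" using k by (simp add: take_Suc_conv_app_nth)
qed

lemma dist_le_walk:
  assumes "walk S E p" "hd p = x" "last p = y"
  shows "dist S E x y \<le> length p - 1"
proof -
  have "length p = Suc (length p - 1)" using assms(1) by (simp add: walk_def)
  then show ?thesis unfolding dist_def using assms by (intro Least_le) blast
qed

lemma dist_nth_le:
  assumes "walk S E p" "i \<le> j" "j < length p"
  shows "dist S E (p ! i) (p ! j) \<le> j - i"
  using dist_le_walk[OF walk_segment[OF assms]] assms by simp

lemma dist_self: "x \<in> S \<Longrightarrow> dist S E x x = 0"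
  using dist_le_walk[of S E "[x]" x x] by (simp add: walk_singleton)

lemma dist_edge_le: "x \<in> S \<Longrightarrow> y \<in> S \<Longrightarrow> E x y \<Longrightarrow> dist S E x y \<le> 1"
  using dist_le_walk[of S E "[x, y]" x y] by (simp add: walk_Cons walk_singleton)

section \<open>Geodesics\<close>

definition geodesic :: "'a set \<Rightarrow> ('a \<Rightarrow> 'a \<Rightarrow> bool) \<Rightarrow> 'a list \<Rightarrow> bool" where
  "geodesic S E p \<longleftrightarrow> walk S E p \<and> length p = Suc (dist S E (hd p) (last p))"

lemma geodesic_exists:
  assumes "reach S E x y"
  shows "\<exists>p. geodesic S E p \<and> hd p = x \<and> last p = y"
proof -
  obtain p where p: "walk S E p" "hd p = x" "last p = y"
    using assms by (auto simp: reach_def)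
  then have "\<exists>n p. walk S E p \<and> hd p = x \<and> last p = y \<and> length p = Suc n"
    by (intro exI[of _ "length p - 1"] exI[of _ p]) (auto simp: walk_def)
  then have "\<exists>p. walk S E p \<and> hd p = x \<and> last p = y \<and> length p = Suc (dist S E x y)"
    unfolding dist_def by (rule LeastI_ex)
  then show ?thesis by (auto simp: geodesic_def)
qed

lemma geodesic_shortest:
  assumes "geodesic S E p" "walk S E q" "hd q = hd p" "last q = last p"
  shows "length p \<le> length q"
proof -
  have "0 < length q" using assms(2) by (simp add: walk_def)
  then show ?thesis using assms(1) dist_le_walk[OF assms(2-4)]
    unfolding geodesic_def by linarith
qed

text \<open>The distance of an unreachable pair is unspecified (\<open>LEAST\<close> of an empty set),
  hence the reachability hypotheses here and below.\<close>

lemma dist_triangle: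
  assumes "reach S E x y" "reach S E y z"
  shows "dist S E x z \<le> dist S E x y + dist S E y z"
proof -
  obtain p q where p: "geodesic S E p" "hd p = x" "last p = y"
    and q: "geodesic S E q" "hd q = y" "last q = z"
    using geodesic_exists assms by metis
  have "p \<noteq> []" "q \<noteq> []" "walk S E p" "walk S E q"
    using p q by (auto simp: geodesic_def walk_def)
  then have "dist S E x z \<le> length (p @ tl q) - 1"
    using p q by (intro dist_le_walk walk_append) (auto simp: last_append_tl)
  then show ?thesis using p q by (simp add: geodesic_def)
qed

lemma geodesic_nth_neq:
  assumes g: "geodesic S E p" and ij: "i < j" "j < length p"
  shows "p ! i \<noteq> p ! j"
proof
  assume eq: "p ! i = p ! j"
  let ?q = "take (Suc i) p @ tl (drop j p)"
  have w: "walk S E p" using g by (simp add: geodesic_def)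
  have ends: "last (take (Suc i) p) = hd (drop j p)" "drop j p \<noteq> []"
    using ij eq by (auto simp: take_Suc_conv_app_nth hd_drop_conv_nth)
  have "walk S E ?q"
    using w ij ends by (intro walk_append walk_take walk_drop) auto
  moreover have "hd ?q = hd p" "last ?q = last p"
    using ij ends by (auto simp: last_append_tl hd_append hd_take)
  ultimately have "length p \<le> length ?q" by (rule geodesic_shortest[OF g])
  then show False using ij by simp
qed

lemma geodesic_no_chord:
  assumes g: "geodesic S E p" and ij: "Suc i < j" "j < length p"
  shows "\<not> E (p ! i) (p ! j)"
proof
  assume e: "E (p ! i) (p ! j)"
  have w: "walk S E p" using g by (simp add: geodesic_def)
  have "walk S E (p ! i # drop j p)"
  proof -
    have "drop j p = p ! j # drop (Suc j) p" using ij by (simp add: Cons_nth_drop_Suc)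
    then show ?thesis
      using w ij e walk_drop[OF w, of j] by (simp add: walk_Cons walk_nth_in)
  qed
  then have "walk S E (take (Suc i) p @ tl (p ! i # drop j p))"
    using w ij by (intro walk_append walk_take) (auto simp: take_Suc_conv_app_nth)
  then have "length p \<le> length (take (Suc i) p @ tl (p ! i # drop j p))"
    using ij by (intro geodesic_shortest[OF g]) (auto simp: last_drop hd_append)
  then show False using ij by simp
qed

section \<open>Chordal graphs and simplicial vertices\<close>

definition induced_path :: "('a \<Rightarrow> 'a \<Rightarrow> bool) \<Rightarrow> 'a list \<Rightarrow> bool" where
  "induced_path E p \<longleftrightarrow> distinct p \<and>
     (\<forall>i<length p. \<forall>j<length p. E (p ! i) (p ! j) \<longleftrightarrow> j = Suc i \<or> i = Suc j)"

locale simple_adjacency =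
  fixes E :: "'a \<Rightarrow> 'a \<Rightarrow> bool"
  assumes adj_sym: "E x y \<Longrightarrow> E y x"
    and adj_irrefl: "\<not> E x x"
begin

lemma walk_rev:
  assumes w: "walk S E p"
  shows "walk S E (rev p)"
proof -
  have "E (rev p ! i) (rev p ! Suc i)" if i: "Suc i < length p" for i
  proof -
    let ?k = "length p - Suc (Suc i)"
    have "rev p ! i = p ! Suc ?k" "rev p ! Suc i = p ! ?k"
      using i by (simp_all add: rev_nth Suc_diff_Suc)
    then show ?thesis using walk_nth_adj[OF w, of ?k] i adj_sym by simp
  qed
  then show ?thesis using w by (simp add: walk_def)
qed

lemma reach_sym: "reach S E x y \<Longrightarrow> reach S E y x"
  unfolding reach_def by (auto intro!: walk_rev simp: hd_rev last_rev)

lemma dist_sym: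
  assumes "reach S E x y"
  shows "dist S E y x = dist S E x y"
proof -
  have le: "dist S E b a \<le> dist S E a b" if ab: "reach S E a b" for a b
  proof -
    obtain p where p: "geodesic S E p" "hd p = a" "last p = b"
      using geodesic_exists[OF ab] by blast
    then have "dist S E b a \<le> length (rev p) - 1"
      by (intro dist_le_walk walk_rev) (auto simp: geodesic_def hd_rev last_rev)
    with p show ?thesis by (simp add: geodesic_def)
  qed
  show ?thesis using le[OF assms] le[OF reach_sym[OF assms]] by simp
qed

lemma geodesic_induced_path:
  assumes g: "geodesic S E p"
  shows "induced_path E p"
  unfolding induced_path_def
proof (intro conjI allI impI)
  show "distinct p"
    using geodesic_nth_neq[OF g] by (metis distinct_conv_nth nat_neq_iff)
  fix i j assume ij: "i < length p" "j < length p"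
  have w: "walk S E p" using g by (simp add: geodesic_def)
  show "E (p ! i) (p ! j) \<longleftrightarrow> j = Suc i \<or> i = Suc j"
  proof
    assume e: "E (p ! i) (p ! j)"
    have "\<not> Suc i < j" using geodesic_no_chord[OF g _ ij(2)] e by blast
    moreover have "\<not> Suc j < i" using geodesic_no_chord[OF g _ ij(1)] adj_sym[OF e] by blast
    moreover have "i \<noteq> j" using e adj_irrefl by blast
    ultimately show "j = Suc i \<or> i = Suc j" by linarith
  next
    assume "j = Suc i \<or> i = Suc j"
    then show "E (p ! i) (p ! j)" using walk_nth_adj[OF w] ij adj_sym by blast
  qed
qed

lemma induced_cycle_Cons_apex:
  assumes p: "induced_path E p" "set p \<subseteq> V" "p \<noteq> []"
    and a: "a \<in> V" "a \<notin> set p" "\<forall>i<length p. E a (p ! i) \<longleftrightarrow> i = 0 \<or> Suc i = length p"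
  shows "induced_cycle V E (a # p)"
  unfolding induced_cycle_def
proof (intro conjI allI impI)
  show "distinct (a # p)" "set (a # p) \<subseteq> V" using p a by (auto simp: induced_path_def)
  fix i j assume ij: "i < length (a # p)" "j < length (a # p)"
  have m: "Suc 0 < length (a # p)" using p(3) by simp
  show "E ((a # p) ! i) ((a # p) ! j) \<longleftrightarrow>
      j = Suc i mod length (a # p) \<or> i = Suc j mod length (a # p)"
  proof (cases i)
    case 0
    then show ?thesis using ij m a(3) adj_irrefl by (cases j) (auto simp: mod_Suc)
  next
    case (Suc i')
    then show ?thesis
      using ij m a(3) p(1) adj_sym by (cases j) (auto simp: mod_Suc induced_path_def)
  qed
qed

text \<open>Otherwise a shortest \<open>x\<close>-\<open>y\<close> path through \<open>C\<close> closes with \<open>a\<close> into a chordless cycle of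
  length at least 4.\<close>

lemma chordal_common_nbrs_adjacent:
  assumes ch: "chordal V E" and C: "C \<subseteq> V" "a \<in> V" "a \<notin> C" "\<forall>z\<in>C. \<not> E a z"
    and xy: "x \<in> V" "y \<in> V" "x \<noteq> y" "E a x" "E a y"
    and r: "reach (C \<union> {x, y}) E x y"
  shows "E x y"
proof (rule ccontr)
  assume nxy: "\<not> E x y"
  obtain p where g: "geodesic (C \<union> {x, y}) E p" and hp: "hd p = x" and lp: "last p = y"
    using geodesic_exists[OF r] by blast
  have w: "walk (C \<union> {x, y}) E p" using g by (simp add: geodesic_def)
  have ip: "induced_path E p" using g by (rule geodesic_induced_path)
  have ne: "p \<noteq> []" using w by (simp add: walk_def)
  have ends: "p ! 0 = x" "p ! (length p - 1) = y"
    using hp lp ne by (simp_all add: hd_conv_nth last_conv_nth)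
  have len: "3 \<le> length p"
  proof -
    have "length p \<noteq> 1" using ends xy(3) by auto
    moreover have "length p \<noteq> 2" using ends nxy walk_nth_adj[OF w, of 0] by auto
    moreover have "length p \<noteq> 0" using ne by simp
    ultimately show ?thesis by linarith
  qed
  have inner: "p ! i \<in> C" if "0 < i" "Suc i < length p" for i
  proof -
    have d: "distinct p" using ip by (simp add: induced_path_def)
    have "p ! i \<noteq> p ! 0" using that nth_eq_iff_index_eq[OF d, of i 0] by linarith
    moreover have "p ! i \<noteq> p ! (length p - 1)"
      using that nth_eq_iff_index_eq[OF d, of i "length p - 1"] by linarith
    ultimately have "p ! i \<noteq> x" "p ! i \<noteq> y" using ends by auto
    then show ?thesis using that walk_nth_in[OF w, of i] by auto
  qed
  have apex: "\<forall>i<length p. E a (p ! i) \<longleftrightarrow> i = 0 \<or> Suc i = length p"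
  proof (intro allI impI)
    fix i assume "i < length p"
    then show "E a (p ! i) \<longleftrightarrow> i = 0 \<or> Suc i = length p"
      using ends inner[of i] C(4) xy(4,5) by (cases "i = 0 \<or> i = length p - 1") auto
  qed
  have "a \<notin> set p"
    using w C(3) xy(4,5) adj_irrefl by (auto simp: walk_def)
  moreover have "set p \<subseteq> V" using w C(1) xy(1,2) by (auto simp: walk_def)
  ultimately have "induced_cycle V E (a # p)"
    using induced_cycle_Cons_apex[OF ip _ ne C(2) _ apex] by blast
  then show False using ch len unfolding chordal_def by force
qed

end

definition component :: "'a set \<Rightarrow> ('a \<Rightarrow> 'a \<Rightarrow> bool) \<Rightarrow> 'a \<Rightarrow> 'a set" where
  "component W E c = {z. reach W E c z}"

definition boundary :: "'a set \<Rightarrow> ('a \<Rightarrow> 'a \<Rightarrow> bool) \<Rightarrow> 'a set \<Rightarrow> 'a set" where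
  "boundary V E C = {y \<in> V. y \<notin> C \<and> (\<exists>z\<in>C. E y z)}"

definition non_nbrs :: "'a set \<Rightarrow> ('a \<Rightarrow> 'a \<Rightarrow> bool) \<Rightarrow> 'a \<Rightarrow> 'a set" where
  "non_nbrs V E a = {z \<in> V. z \<noteq> a \<and> \<not> E a z}"

definition clique :: "'a set \<Rightarrow> ('a \<Rightarrow> 'a \<Rightarrow> bool) \<Rightarrow> 'a set \<Rightarrow> bool" where
  "clique V E K \<longleftrightarrow> K \<subseteq> V \<and> (\<forall>x\<in>K. \<forall>y\<in>K. x \<noteq> y \<longrightarrow> E x y)"

definition simplicial :: "'a set \<Rightarrow> ('a \<Rightarrow> 'a \<Rightarrow> bool) \<Rightarrow> 'a \<Rightarrow> bool" where
  "simplicial V E s \<longleftrightarrow> s \<in> V \<and> (\<forall>x\<in>V. \<forall>y\<in>V. E s x \<longrightarrow> E s y \<longrightarrow> x \<noteq> y \<longrightarrow> E x y)"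

lemma chordal_subset: "chordal V E \<Longrightarrow> W \<subseteq> V \<Longrightarrow> chordal W E"
  unfolding chordal_def induced_cycle_def by blast

lemma component_subset: "component W E c \<subseteq> W"
  unfolding component_def by (auto dest: reach_in)

lemma self_in_component: "c \<in> W \<Longrightarrow> c \<in> component W E c"
  unfolding component_def by (simp add: reach_refl)

lemma component_closed:
  assumes "z \<in> component W E c" "y \<in> W" "E z y"
  shows "y \<in> component W E c"
proof -
  have "reach W E c z" using assms(1) by (simp add: component_def)
  moreover have "reach W E z y" using assms reach_in calculation by (intro reach_edge)
  ultimately show ?thesis by (simp add: component_def reach_trans)
qed

lemma walk_in_component:
  assumes w: "walk W E p" and "hd p \<in> component W E c"
  shows "set p \<subseteq> component W E c"
proof
  fix z assume "z \<in> set p"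
  then obtain k where k: "k < length p" "z = p ! k" by (auto simp: in_set_conv_nth)
  have "reach W E c (hd p)" using assms(2) by (simp add: component_def)
  then show "z \<in> component W E c"
    using reach_trans reach_nth[OF w k(1)] k(2) by (simp add: component_def)
qed

context simple_adjacency
begin

lemma component_connected: "connected_on (component W E c) E"
  unfolding connected_on_def
proof (intro ballI)
  fix u v assume u: "u \<in> component W E c" and v: "v \<in> component W E c"
  then have "reach W E c u" "reach W E c v" by (simp_all add: component_def)
  then have "reach W E u v" by (rule reach_trans[OF reach_sym])
  then obtain p where p: "walk W E p" "hd p = u" "last p = v" by (auto simp: reach_def)
  then have "set p \<subseteq> component W E c" using walk_in_component[OF p(1)] u by simp
  then have "walk (component W E c) E p" using p(1) by (rule walk_subset[rotated])
  then show "reach (component W E c) E u v" using p unfolding reach_def by blast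
qed

lemma boundary_component_nbrs:
  "boundary V E (component (non_nbrs V E a) E c) \<subseteq> {y. E a y}"
proof
  let ?C = "component (non_nbrs V E a) E c"
  fix y assume "y \<in> boundary V E ?C"
  then obtain z where y: "y \<in> V" "y \<notin> ?C" and z: "z \<in> ?C" "E y z"
    by (auto simp: boundary_def)
  have "y \<notin> non_nbrs V E a" using component_closed[OF z(1) _ adj_sym[OF z(2)]] y(2) by blast
  moreover have "z \<in> non_nbrs V E a" using component_subset z(1) by (rule subsetD)
  ultimately show "y \<in> {y. E a y}" using y z(2) by (auto simp: non_nbrs_def)
qed

lemma chordal_boundary_clique:
  assumes ch: "chordal V E" and a: "a \<in> V"
  shows "clique V E (boundary V E (component (non_nbrs V E a) E c))"
  unfolding clique_def
proof (intro conjI ballI impI)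
  let ?C = "component (non_nbrs V E a) E c"
  show "boundary V E ?C \<subseteq> V" by (auto simp: boundary_def)
  fix x y assume x: "x \<in> boundary V E ?C" and y: "y \<in> boundary V E ?C" and "x \<noteq> y"
  obtain x' y' where x': "x' \<in> ?C" "E x x'" and y': "y' \<in> ?C" "E y y'"
    using x y by (auto simp: boundary_def)
  have CV: "?C \<subseteq> V" and Ca: "a \<notin> ?C" "\<forall>z\<in>?C. \<not> E a z"
    using component_subset[of "non_nbrs V E a" E c] by (auto simp: non_nbrs_def)
  have xyV: "x \<in> V" "y \<in> V" using x y by (auto simp: boundary_def)
  have "reach ?C E x' y'"
    using component_connected x'(1) y'(1) unfolding connected_on_def by blast
  then have "reach (?C \<union> {x, y}) E x' y'" by (rule reach_mono) blast
  moreover have "reach (?C \<union> {x, y}) E x x'" using x' by (intro reach_edge) auto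
  moreover have "reach (?C \<union> {x, y}) E y' y" using y' adj_sym[OF y'(2)] by (intro reach_edge) auto
  ultimately have "reach (?C \<union> {x, y}) E x y" by (metis reach_trans)
  moreover have "E a x" "E a y" using boundary_component_nbrs x y by auto
  ultimately show "E x y"
    using chordal_common_nbrs_adjacent[OF ch CV a Ca xyV \<open>x \<noteq> y\<close>] by blast
qed

lemma simplicial_Diff_universal:
  assumes s: "simplicial (V - {a}) E s" and a: "\<forall>y\<in>V. y \<noteq> a \<longrightarrow> E a y"
  shows "simplicial V E s"
  unfolding simplicial_def
proof (intro conjI ballI impI)
  show "s \<in> V" using s by (simp add: simplicial_def)
  fix x y assume xy: "x \<in> V" "y \<in> V" "E s x" "E s y" "x \<noteq> y"
  show "E x y"
  proof (cases "x = a \<or> y = a")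
    case True
    then consider "x = a" "y \<noteq> a" | "y = a" "x \<noteq> a" using xy(5) by blast
    then show ?thesis using a xy(1,2) adj_sym[of a x] by cases auto
  next
    case False
    then show ?thesis using s xy by (simp add: simplicial_def)
  qed
qed

lemma simplicial_of_component_part:
  assumes C: "C \<subseteq> V" "s \<in> C" and s: "simplicial (C \<union> boundary V E C) E s"
  shows "simplicial V E s"
proof -
  have "x \<in> C \<union> boundary V E C" if "x \<in> V" "E s x" for x
    using that C(2) adj_sym[OF that(2)] by (auto simp: boundary_def)
  then show ?thesis using s C unfolding simplicial_def by blast
qed

lemma component_with_boundary_psubset:
  assumes "a \<in> V"
  shows "component (non_nbrs V E a) E c \<union> boundary V E (component (non_nbrs V E a) E c) \<subset> V"
proof -
  have "component (non_nbrs V E a) E c \<subseteq> non_nbrs V E a" by (rule component_subset)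
  then show ?thesis using assms boundary_component_nbrs[of V a c] adj_irrefl[of a]
    by (auto simp: non_nbrs_def boundary_def)
qed

lemma clique_in_closed_nbhd_of_non_universal:
  assumes K: "clique V E K" and "\<exists>a\<in>V. \<exists>y\<in>V. y \<noteq> a \<and> \<not> E a y"
    and "\<not> (\<exists>a\<in>K. \<forall>y\<in>V. y \<noteq> a \<longrightarrow> E a y)"
  shows "\<exists>a c. a \<in> V \<and> c \<in> non_nbrs V E a \<and> K \<subseteq> insert a {y. E a y}"
proof (cases "K = {}")
  case True
  then show ?thesis using assms(2) by (auto simp: non_nbrs_def)
next
  case False
  then obtain a where "a \<in> K" by blast
  then show ?thesis using assms(3) K by (fastforce simp: clique_def non_nbrs_def)
qed

text \<open>If \<open>K\<close> contains a universal vertex, delete it; otherwise pick a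
  non-universal \<open>a\<close> whose closed neighbourhood contains \<open>K\<close> and recurse into a component \<open>C\<close> of
  the non-neighbours of \<open>a\<close> together with its boundary, which is a clique avoiding \<open>C\<close>.\<close>

lemma simplicial_outside_clique:
  assumes "finite V" "chordal V E" "clique V E K" "v \<in> V" "v \<notin> K"
  shows "\<exists>s. simplicial V E s \<and> s \<notin> K"
  using assms
proof (induction "card V" arbitrary: V K v rule: less_induct)
  case less
  note fin = less.prems(1) and ch = less.prems(2) and K = less.prems(3)
  show ?case
  proof (cases "\<exists>a\<in>V. \<exists>y\<in>V. y \<noteq> a \<and> \<not> E a y")
    case False
    then show ?thesis using less.prems(4,5) by (intro exI[of _ v]) (auto simp: simplicial_def)
  next
    case incomplete: True
    show ?thesis
    proof (cases "\<exists>a\<in>K. \<forall>y\<in>V. y \<noteq> a \<longrightarrow> E a y")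
      case True
      then obtain a where a: "a \<in> K" "\<forall>y\<in>V. y \<noteq> a \<longrightarrow> E a y" by blast
      have "a \<in> V" using a(1) K by (auto simp: clique_def)
      then have "card (V - {a}) < card V" by (rule card_Diff1_less[OF fin])
      moreover have "clique (V - {a}) E (K - {a})" using K by (auto simp: clique_def)
      moreover have "chordal (V - {a}) E" using ch by (rule chordal_subset) blast
      moreover have "v \<in> V - {a}" "v \<notin> K - {a}" using less.prems(4,5) a(1) by auto
      ultimately obtain s where s: "simplicial (V - {a}) E s" "s \<notin> K - {a}"
        using less.hyps[of "V - {a}"] fin by blast
      have "s \<noteq> a" using s(1) by (simp add: simplicial_def)
      then show ?thesis using simplicial_Diff_universal[OF s(1) a(2)] s(2) by blast
    next
      case False
      obtain a c where a: "a \<in> V" "c \<in> non_nbrs V E a" "K \<subseteq> insert a {y. E a y}"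
        using clique_in_closed_nbhd_of_non_universal[OF K incomplete False] by blast
      let ?C = "component (non_nbrs V E a) E c"
      let ?U = "?C \<union> boundary V E ?C"
      have CW: "?C \<subseteq> non_nbrs V E a" by (rule component_subset)
      then have CV: "?C \<subseteq> V" by (auto simp: non_nbrs_def)
      have U: "?U \<subset> V" using a(1) by (rule component_with_boundary_psubset)
      then have "card ?U < card V" "finite ?U" "chordal ?U E"
        using psubset_card_mono[OF fin U] finite_subset[OF psubset_imp_subset[OF U] fin]
          chordal_subset[OF ch psubset_imp_subset[OF U]] by simp_all
      moreover have "clique ?U E (boundary V E ?C)"
        using chordal_boundary_clique[OF ch a(1)] by (auto simp: clique_def)
      moreover have "c \<in> ?U" "c \<notin> boundary V E ?C"
        using self_in_component[OF a(2)] by (auto simp: boundary_def)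
      ultimately obtain s where s: "simplicial ?U E s" "s \<notin> boundary V E ?C"
        using less.hyps[of ?U] by blast
      then have "s \<in> ?C" by (auto simp: simplicial_def)
      then have "s \<notin> K" using CW a(3) by (auto simp: non_nbrs_def)
      then show ?thesis using simplicial_of_component_part[OF CV \<open>s \<in> ?C\<close> s(1)] by blast
    qed
  qed
qed

lemma simplicial_exists:
  assumes "finite V" "chordal V E" "V \<noteq> {}"
  shows "\<exists>s. simplicial V E s"
proof -
  obtain v where "v \<in> V" using assms(3) by blast
  moreover have "clique V E {}" by (simp add: clique_def)
  ultimately show ?thesis using simplicial_outside_clique[OF assms(1,2)] by blast
qed

lemma simplicial_closed_nbhd_clique:
  assumes s: "simplicial V E s"
  shows "clique V E (insert s {y \<in> V. E s y})"
  unfolding clique_def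
proof (intro conjI ballI impI)
  show "insert s {y \<in> V. E s y} \<subseteq> V" using s by (auto simp: simplicial_def)
  fix x y assume x: "x \<in> insert s {y \<in> V. E s y}" and y: "y \<in> insert s {y \<in> V. E s y}"
    and xy: "x \<noteq> y"
  show "E x y"
  proof (cases "x = s \<or> y = s")
    case True
    then show ?thesis using x y xy adj_sym[of s x] by auto
  next
    case False
    then show ?thesis using s x y xy by (simp add: simplicial_def)
  qed
qed

end

section \<open>A Helly property of connected sets\<close>

definition touching :: "('a \<Rightarrow> 'a \<Rightarrow> bool) \<Rightarrow> 'a set \<Rightarrow> 'a set \<Rightarrow> bool" where
  "touching E A B \<longleftrightarrow> (\<exists>a\<in>A. \<exists>b\<in>B. a = b \<or> E a b)"

lemma touching_singleton_closed_nbhd: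
  "touching E {s} S \<Longrightarrow> S \<subseteq> V \<Longrightarrow> insert s {y \<in> V. E s y} \<inter> S \<noteq> {}"
  unfolding touching_def by blast

lemma connected_on_nbr:
  assumes "connected_on S E" "s \<in> S" "b \<in> S" "b \<noteq> s"
  shows "\<exists>a\<in>S - {s}. E s a"
proof -
  obtain p where g: "geodesic S E p" and p: "hd p = s" "last p = b"
    using assms geodesic_exists unfolding connected_on_def by metis
  have w: "walk S E p" using g by (simp add: geodesic_def)
  have "Suc 0 < length p"
  proof (rule ccontr)
    assume "\<not> Suc 0 < length p"
    then have "p = [hd p]" using w by (cases p) (auto simp: walk_def)
    then show False using p assms(4) by (metis last_ConsL)
  qed
  then have "p ! 1 \<in> S" "E (p ! 0) (p ! 1)" "p ! 0 \<noteq> p ! 1"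
    using walk_nth_in[OF w] walk_nth_adj[OF w, of 0] geodesic_nth_neq[OF g, of 0 1] by auto
  moreover have "p ! 0 = s" using p w by (simp add: hd_conv_nth walk_def)
  ultimately show ?thesis by auto
qed

context simple_adjacency
begin

lemma connected_on_Diff_simplicial:
  assumes c: "connected_on S E" and "S \<subseteq> V" and s: "simplicial V E s"
  shows "connected_on (S - {s}) E"
  unfolding connected_on_def
proof (intro ballI)
  fix a b assume a: "a \<in> S - {s}" and b: "b \<in> S - {s}"
  obtain p where g: "geodesic S E p" and p: "hd p = a" "last p = b"
    using a b c geodesic_exists unfolding connected_on_def by (metis DiffD1)
  have w: "walk S E p" using g by (simp add: geodesic_def)
  have avoid: "p ! i \<noteq> s" if i: "i < length p" for i
  proof
    assume pi: "p ! i = s"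
    have ne: "p \<noteq> []" using w by (simp add: walk_def)
    have ends: "p ! 0 = a" "p ! (length p - 1) = b"
      using p ne by (simp_all add: hd_conv_nth last_conv_nth)
    then have "p ! i \<noteq> p ! 0" "p ! i \<noteq> p ! (length p - 1)" using a b pi by auto
    then have i0: "i \<noteq> 0" "i \<noteq> length p - 1" by metis+
    obtain j where j: "i = Suc j" "Suc (Suc j) < length p"
      using i i0 by (cases i) auto
    have "E s (p ! j)" "E s (p ! Suc (Suc j))"
      using walk_nth_adj[OF w, of j] walk_nth_adj[OF w, of "Suc j"] j pi adj_sym[of "p ! j" s]
      by auto
    moreover have "p ! j \<noteq> p ! Suc (Suc j)" using geodesic_nth_neq[OF g, of j] j by simp
    moreover have "p ! j \<in> V" "p ! Suc (Suc j) \<in> V"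
      using walk_nth_in[OF w] j \<open>S \<subseteq> V\<close> by auto
    ultimately have "E (p ! j) (p ! Suc (Suc j))" using s by (simp add: simplicial_def)
    then show False using geodesic_no_chord[OF g _ j(2)] by simp
  qed
  then have "s \<notin> set p" by (metis in_set_conv_nth)
  then have "set p \<subseteq> S - {s}" using w by (auto simp: walk_def)
  then have "walk (S - {s}) E p" using w by (rule walk_subset[rotated])
  then show "reach (S - {s}) E a b" using p unfolding reach_def by blast
qed

lemma touching_Diff_simplicial:
  assumes s: "simplicial V E s"
    and A: "A \<subseteq> V" "connected_on A E" "A \<noteq> {s}"
    and B: "B \<subseteq> V" "connected_on B E" "B \<noteq> {s}"
    and t: "touching E A B"
  shows "touching E (A - {s}) (B - {s})"
proof -
  have replace: "\<exists>x'\<in>X - {s}. (x \<noteq> s \<longrightarrow> x' = x) \<and> (x = s \<longrightarrow> E s x')"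
    if X: "connected_on X E" "X \<noteq> {s}" "x \<in> X" for X x
  proof (cases "x = s")
    case True
    then obtain b where "b \<in> X" "b \<noteq> s" using X by blast
    then show ?thesis using connected_on_nbr[OF X(1)] X(3) True by blast
  qed (use X in blast)
  obtain a b where ab: "a \<in> A" "b \<in> B" "a = b \<or> E a b" using t by (auto simp: touching_def)
  obtain a' where a': "a' \<in> A - {s}" "a \<noteq> s \<longrightarrow> a' = a" "a = s \<longrightarrow> E s a'"
    using replace[OF A(2,3) ab(1)] by blast
  obtain b' where b': "b' \<in> B - {s}" "b \<noteq> s \<longrightarrow> b' = b" "b = s \<longrightarrow> E s b'"
    using replace[OF B(2,3) ab(2)] by blast
  have "a' = b' \<or> E a' b'"
  proof (cases "a = s \<or> b = s")
    case True
    then have "E s a'" "E s b'" using ab(3) a' b' adj_sym[of a s] adj_irrefl[of s] by auto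
    moreover have "a' \<in> V" "b' \<in> V" using a'(1) b'(1) A(1) B(1) by auto
    ultimately show ?thesis using s by (auto simp: simplicial_def)
  next
    case False
    then show ?thesis using ab(3) a' b' by simp
  qed
  then show ?thesis using a'(1) b'(1) by (auto simp: touching_def)
qed

lemma Diff_simplicial_family:
  assumes s: "simplicial V E s"
    and FS: "\<forall>S\<in>F. S \<noteq> {} \<and> S \<subseteq> V \<and> connected_on S E"
    and FT: "\<forall>A\<in>F. \<forall>B\<in>F. touching E A B" and "{s} \<notin> F"
  shows "\<forall>S'\<in>(\<lambda>S. S - {s}) ` F. S' \<noteq> {} \<and> S' \<subseteq> V - {s} \<and> connected_on S' E"
    and "\<forall>A'\<in>(\<lambda>S. S - {s}) ` F. \<forall>B'\<in>(\<lambda>S. S - {s}) ` F. touching E A' B'"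
proof -
  have S: "S \<noteq> {}" "S \<subseteq> V" "connected_on S E" "S \<noteq> {s}" if "S \<in> F" for S
    using FS \<open>{s} \<notin> F\<close> that by auto
  show "\<forall>S'\<in>(\<lambda>S. S - {s}) ` F. S' \<noteq> {} \<and> S' \<subseteq> V - {s} \<and> connected_on S' E"
  proof
    fix S' assume "S' \<in> (\<lambda>S. S - {s}) ` F"
    then obtain S where "S \<in> F" "S' = S - {s}" by blast
    then show "S' \<noteq> {} \<and> S' \<subseteq> V - {s} \<and> connected_on S' E"
      using S[OF \<open>S \<in> F\<close>] connected_on_Diff_simplicial[OF _ _ s] by blast
  qed
  show "\<forall>A'\<in>(\<lambda>S. S - {s}) ` F. \<forall>B'\<in>(\<lambda>S. S - {s}) ` F. touching E A' B'"
  proof (intro ballI)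
    fix A' B' assume "A' \<in> (\<lambda>S. S - {s}) ` F" "B' \<in> (\<lambda>S. S - {s}) ` F"
    then obtain A B where AB: "A \<in> F" "B \<in> F" "A' = A - {s}" "B' = B - {s}" by blast
    then have "touching E (A - {s}) (B - {s})"
      using S[OF AB(1)] S[OF AB(2)] FT by (intro touching_Diff_simplicial[OF s]) auto
    then show "touching E A' B'" using AB by simp
  qed
qed

text \<open>Induction deleting a simplicial vertex \<open>s\<close>; if \<open>{s}\<close> itself belongs to the family, the
  closed neighbourhood of \<open>s\<close> is the required clique.\<close>

lemma chordal_helly_touching:
  assumes "finite V" "chordal V E"
    and "\<forall>S\<in>F. S \<noteq> {} \<and> S \<subseteq> V \<and> connected_on S E"
    and "\<forall>A\<in>F. \<forall>B\<in>F. touching E A B"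
  shows "\<exists>Q. clique V E Q \<and> (\<forall>S\<in>F. Q \<inter> S \<noteq> {})"
  using assms
proof (induction "card V" arbitrary: V F rule: less_induct)
  case less
  note fin = less.prems(1) and ch = less.prems(2) and FS = less.prems(3) and FT = less.prems(4)
  show ?case
  proof (cases "V = {}")
    case True
    then have "F = {}" using FS by blast
    then show ?thesis by (auto simp: clique_def)
  next
    case False
    then obtain s where s: "simplicial V E s" using simplicial_exists[OF fin ch] by blast
    have sV: "s \<in> V" using s by (simp add: simplicial_def)
    show ?thesis
    proof (cases "{s} \<in> F")
      case True
      have "insert s {y \<in> V. E s y} \<inter> S \<noteq> {}" if "S \<in> F" for S
      proof (rule touching_singleton_closed_nbhd)
        show "touching E {s} S" "S \<subseteq> V" using FS FT True that by blast+
      qed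
      then show ?thesis using simplicial_closed_nbhd_clique[OF s] by blast
    next
      case False
      let ?F = "(\<lambda>S. S - {s}) ` F"
      have "card (V - {s}) < card V" using fin sV by (rule card_Diff1_less)
      moreover have "finite (V - {s})" using fin by simp
      moreover have "chordal (V - {s}) E" using ch by (rule chordal_subset) blast
      moreover have "\<forall>S'\<in>?F. S' \<noteq> {} \<and> S' \<subseteq> V - {s} \<and> connected_on S' E"
        "\<forall>A'\<in>?F. \<forall>B'\<in>?F. touching E A' B'"
        using Diff_simplicial_family[OF s FS FT False] by blast+
      ultimately obtain Q where Q: "clique (V - {s}) E Q" "\<forall>S\<in>?F. Q \<inter> S \<noteq> {}"
        using less.hyps[of "V - {s}" ?F] by blast
      have "clique V E Q" using Q(1) by (auto simp: clique_def)
      moreover have "Q \<inter> S \<noteq> {}" if "S \<in> F" for S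
      proof -
        have "Q \<inter> (S - {s}) \<noteq> {}" by (rule bspec[OF Q(2) imageI[OF that]])
        then show ?thesis by blast
      qed
      ultimately show ?thesis by blast
    qed
  qed
qed

end

section \<open>Balls and the center\<close>

definition ball :: "'a set \<Rightarrow> ('a \<Rightarrow> 'a \<Rightarrow> bool) \<Rightarrow> 'a \<Rightarrow> nat \<Rightarrow> 'a set" where
  "ball V E x r = {y \<in> V. dist V E x y \<le> r}"

lemma centre_in_ball: "x \<in> V \<Longrightarrow> x \<in> ball V E x r"
  by (simp add: ball_def dist_self)

lemma dist_le_ecc: "finite V \<Longrightarrow> y \<in> V \<Longrightarrow> dist V E x y \<le> ecc V E x"
  unfolding ecc_def by (rule Max_ge) auto

lemma ecc_le:
  "finite V \<Longrightarrow> V \<noteq> {} \<Longrightarrow> (\<And>y. y \<in> V \<Longrightarrow> dist V E x y \<le> k) \<Longrightarrow> ecc V E x \<le> k"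
  unfolding ecc_def by (subst Max_le_iff) auto

lemma rad_le_ecc: "finite V \<Longrightarrow> x \<in> V \<Longrightarrow> rad V E \<le> ecc V E x"
  unfolding rad_def by (rule Min_le) auto

lemma ecc_le_diam: "finite V \<Longrightarrow> x \<in> V \<Longrightarrow> ecc V E x \<le> diam V E"
  unfolding diam_def by (rule Max_ge) auto

lemma dist_le_diam: "finite V \<Longrightarrow> x \<in> V \<Longrightarrow> y \<in> V \<Longrightarrow> dist V E x y \<le> diam V E"
  using dist_le_ecc ecc_le_diam le_trans by metis

lemma rad_attained:
  assumes "finite V" "V \<noteq> {}"
  shows "\<exists>c\<in>V. ecc V E c = rad V E"
proof -
  have "rad V E \<in> ecc V E ` V" unfolding rad_def using assms by (intro Min_in) auto
  then show ?thesis by (metis imageE)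
qed

context simple_adjacency
begin

lemma ball_connected:
  assumes con: "connected_on V E" and x: "x \<in> V"
  shows "connected_on (ball V E x r) E"
proof -
  have from_centre: "reach (ball V E x r) E x y" if y: "y \<in> ball V E x r" for y
  proof -
    have "reach V E x y" using con x y by (simp add: connected_on_def ball_def)
    then obtain p where g: "geodesic V E p" and p: "hd p = x" "last p = y"
      using geodesic_exists by metis
    have w: "walk V E p" using g by (simp add: geodesic_def)
    have "p ! i \<in> ball V E x r" if i: "i < length p" for i
    proof -
      have "p ! 0 = x" using p(1) w by (simp add: hd_conv_nth walk_def)
      then have "dist V E x (p ! i) \<le> i" using dist_nth_le[OF w, of 0 i] i by simp
      also have "i \<le> dist V E x y" using i g p by (simp add: geodesic_def)
      also have "\<dots> \<le> r" using y by (simp add: ball_def)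
      finally show ?thesis using walk_nth_in[OF w i] by (simp add: ball_def)
    qed
    then have "set p \<subseteq> ball V E x r" by (metis in_set_conv_nth subsetI)
    then have "walk (ball V E x r) E p" using w by (rule walk_subset[rotated])
    then show ?thesis using p unfolding reach_def by blast
  qed
  show ?thesis
    unfolding connected_on_def
    using reach_trans[OF reach_sym[OF from_centre] from_centre] by blast
qed

lemma ball_touching:
  assumes con: "connected_on V E" and xy: "x \<in> V" "y \<in> V"
    and d: "dist V E x y \<le> a + b + 1"
  shows "touching E (ball V E x a) (ball V E y b)"
proof -
  have "reach V E x y" using con xy by (simp add: connected_on_def)
  then obtain p where g: "geodesic V E p" and p: "hd p = x" "last p = y"
    using geodesic_exists by metis
  define n where "n = dist V E x y"
  have w: "walk V E p" and len: "length p = Suc n"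
    using g p by (simp_all add: geodesic_def n_def)
  have ends: "p ! 0 = x" "p ! n = y"
    using p len w by (simp_all add: hd_conv_nth last_conv_nth walk_def)
  define i j where "i = min a n" and "j = min (Suc a) n"
  have ij: "i \<le> j" "j \<le> n" by (simp_all add: i_def j_def)
  have "dist V E x (p ! i) \<le> a"
    using dist_nth_le[OF w, of 0 i] ends(1) len by (simp add: i_def)
  then have "p ! i \<in> ball V E x a" using walk_nth_in[OF w, of i] ij len by (simp add: ball_def)
  have "reach V E (p ! j) y" using con walk_nth_in[OF w, of j] ij len xy(2)
    unfolding connected_on_def by simp
  then have "dist V E y (p ! j) = dist V E (p ! j) y" by (rule dist_sym)
  also have "\<dots> \<le> n - j" using dist_nth_le[OF w, of j n] ends(2) ij len by simp
  also have "\<dots> \<le> b" using d by (simp add: j_def n_def)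
  finally have "p ! j \<in> ball V E y b" using walk_nth_in[OF w, of j] ij len by (simp add: ball_def)
  moreover have "p ! i = p ! j \<or> E (p ! i) (p ! j)"
  proof (cases "n \<le> a")
    case True
    then show ?thesis by (simp add: i_def j_def)
  next
    case False
    then have "j = Suc i" "Suc i < length p" by (simp_all add: i_def j_def len)
    then show ?thesis using walk_nth_adj[OF w] by simp
  qed
  ultimately show ?thesis using \<open>p ! i \<in> ball V E x a\<close> by (auto simp: touching_def)
qed

lemma ecc_le_of_clique_hitting_balls:
  assumes fin: "finite V" and con: "connected_on V E" and Q: "clique V E Q" "z \<in> Q"
    and hit: "\<forall>x\<in>V. Q \<inter> ball V E x k \<noteq> {}"
  shows "ecc V E z \<le> Suc k"
proof (rule ecc_le[OF fin])
  show "V \<noteq> {}" using Q by (auto simp: clique_def)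
  fix x assume x: "x \<in> V"
  obtain q where q: "q \<in> Q" "q \<in> ball V E x k" using hit x by blast
  have zq: "z \<in> V" "q \<in> V" using Q q(1) by (auto simp: clique_def)
  have "dist V E z q \<le> 1"
  proof (cases "z = q")
    case True
    then show ?thesis using zq by (simp add: dist_self)
  next
    case False
    then show ?thesis using Q q(1) zq by (intro dist_edge_le) (auto simp: clique_def)
  qed
  moreover have "dist V E q x = dist V E x q"
    using con x zq(2) by (simp add: connected_on_def dist_sym)
  moreover have "dist V E z x \<le> dist V E z q + dist V E q x"
    using con x zq by (simp add: connected_on_def dist_triangle)
  ultimately show "dist V E z x \<le> Suc k" using q(2) by (simp add: ball_def)
qed

lemma chordal_clique_meeting_balls:
  assumes fin: "finite V" and con: "connected_on V E" and ch: "chordal V E"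
    and P: "\<And>x k. (x, k) \<in> P \<Longrightarrow> x \<in> V"
    and close: "\<And>x k y l. (x, k) \<in> P \<Longrightarrow> (y, l) \<in> P \<Longrightarrow> dist V E x y \<le> k + l + 1"
  shows "\<exists>Q. clique V E Q \<and> (\<forall>x k. (x, k) \<in> P \<longrightarrow> Q \<inter> ball V E x k \<noteq> {})"
proof -
  define F where "F = (\<lambda>(x, k). ball V E x k) ` P"
  have FS: "\<forall>S\<in>F. S \<noteq> {} \<and> S \<subseteq> V \<and> connected_on S E"
  proof
    fix S assume "S \<in> F"
    then obtain x k where "(x, k) \<in> P" "S = ball V E x k" by (auto simp: F_def)
    moreover from this(1) have "x \<in> V" by (rule P)
    ultimately show "S \<noteq> {} \<and> S \<subseteq> V \<and> connected_on S E"
      using centre_in_ball[of x V E k] ball_connected[OF con, of x k] by (auto simp: ball_def)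
  qed
  have FT: "\<forall>A\<in>F. \<forall>B\<in>F. touching E A B"
  proof (intro ballI)
    fix A B assume "A \<in> F" "B \<in> F"
    then obtain x k y l where xk: "(x, k) \<in> P" "A = ball V E x k"
      and yl: "(y, l) \<in> P" "B = ball V E y l" by (auto simp: F_def)
    have "x \<in> V" "y \<in> V" "dist V E x y \<le> k + l + 1"
      using P[OF xk(1)] P[OF yl(1)] close[OF xk(1) yl(1)] by simp_all
    then show "touching E A B" using ball_touching[OF con] xk(2) yl(2) by blast
  qed
  obtain Q where Q: "clique V E Q" "\<forall>S\<in>F. Q \<inter> S \<noteq> {}"
    using chordal_helly_touching[OF fin ch FS FT] by blast
  have "Q \<inter> ball V E x k \<noteq> {}" if "(x, k) \<in> P" for x k
  proof -
    have "ball V E x k \<in> F" unfolding F_def by (rule image_eqI[OF _ that]) simp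
    then show ?thesis by (rule bspec[OF Q(2)])
  qed
  then show ?thesis using Q(1) by blast
qed

lemma center_near_of_two_rad_le_diam:
  assumes fin: "finite V" and con: "connected_on V E" and u: "u \<in> V"
    and "2 * rad V E \<le> diam V E"
  shows "\<exists>c\<in>center V E. dist V E u c \<le> diam V E - rad V E"
proof -
  obtain c where c: "c \<in> V" "ecc V E c = rad V E" using rad_attained[OF fin] u by blast
  have "dist V E u c = dist V E c u" using con u c(1) by (simp add: connected_on_def dist_sym)
  also have "\<dots> \<le> rad V E" using dist_le_ecc[OF fin u] c(2) by metis
  finally show ?thesis using c assms(4) by (auto simp: center_def)
qed

lemma chordal_center_near_of_diam_lt_two_rad:
  assumes fin: "finite V" and con: "connected_on V E" and ch: "chordal V E" and u: "u \<in> V"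
    and small: "diam V E < 2 * rad V E"
  shows "\<exists>c\<in>center V E. dist V E u c \<le> diam V E - rad V E"
proof -
  define r D where "r = rad V E" and "D = diam V E"
  have rD: "r \<le> D"
    using rad_le_ecc[OF fin u, of E] ecc_le_diam[OF fin u, of E] by (simp add: r_def D_def)
  define P where "P = insert (u, D - r) ((\<lambda>x. (x, r - 1)) ` V)"
  have P: "x \<in> V \<and> (k = r - 1 \<or> x = u \<and> k = D - r)" if "(x, k) \<in> P" for x k
    using that u by (auto simp: P_def)
  have close: "dist V E x y \<le> k + l + 1" if "(x, k) \<in> P" "(y, l) \<in> P" for x k y l
  proof (cases "x = y")
    case True
    then show ?thesis using P[OF that(1)] by (simp add: dist_self)
  next
    case False
    then have "k = r - 1 \<or> l = r - 1" "k = r - 1 \<or> k = D - r" "l = r - 1 \<or> l = D - r"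
      using P[OF that(1)] P[OF that(2)] by auto
    then have "D \<le> k + l + 1" using rD small by (simp add: r_def D_def) linarith
    then show ?thesis
      using dist_le_diam[OF fin, of x y E] P[OF that(1)] P[OF that(2)] by (simp add: D_def)
  qed
  have "\<exists>Q. clique V E Q \<and> (\<forall>x k. (x, k) \<in> P \<longrightarrow> Q \<inter> ball V E x k \<noteq> {})"
  proof (rule chordal_clique_meeting_balls[OF fin con ch])
    show "x \<in> V" if "(x, k) \<in> P" for x k using P[OF that] by blast
  qed (rule close)
  then obtain Q where Q: "clique V E Q" "\<forall>x k. (x, k) \<in> P \<longrightarrow> Q \<inter> ball V E x k \<noteq> {}"
    by blast
  have "Q \<inter> ball V E u (D - r) \<noteq> {}" by (rule Q(2)[rule_format]) (simp add: P_def)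
  then obtain z where z: "z \<in> Q" "z \<in> ball V E u (D - r)" by blast
  have "\<forall>x\<in>V. Q \<inter> ball V E x (r - 1) \<noteq> {}" using Q(2) by (auto simp: P_def)
  then have "ecc V E z \<le> Suc (r - 1)"
    by (rule ecc_le_of_clique_hitting_balls[OF fin con Q(1) z(1)])
  moreover have "z \<in> V" using z(2) by (simp add: ball_def)
  moreover have "r \<le> ecc V E z" using rad_le_ecc[OF fin \<open>z \<in> V\<close>] by (simp add: r_def)
  ultimately have "z \<in> center V E" using small by (simp add: center_def r_def D_def)
  then show ?thesis using z(2) by (auto simp: ball_def r_def D_def)
qed

lemma chordal_center_near:
  assumes "finite V" "connected_on V E" "chordal V E" "u \<in> V"
  shows "\<exists>c\<in>center V E. dist V E u c \<le> diam V E - rad V E"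
proof (cases "2 * rad V E \<le> diam V E")
  case True
  then show ?thesis using center_near_of_two_rad_le_diam assms(1,2,4) by blast
next
  case False
  then show ?thesis using chordal_center_near_of_diam_lt_two_rad assms by simp
qed

end

theorem proposition8:
  fixes V :: "'a set" and E :: "'a \<Rightarrow> 'a \<Rightarrow> bool"
  assumes "finite V" and "graph V E" and "connected_graph V E" and "chordal V E"
  shows "\<forall>u\<in>V. Min ((\<lambda>c. dist V E u c + ecc V E c) ` center V E) \<le> diam V E"
proof
  fix u assume u: "u \<in> V"
  interpret simple_adjacency E
    using \<open>graph V E\<close> by unfold_locales (auto simp: graph_def)
  have con: "connected_on V E" using \<open>connected_graph V E\<close> by (simp add: connected_graph_iff)
  obtain c where c: "c \<in> center V E" "dist V E u c \<le> diam V E - rad V E"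
    using chordal_center_near[OF \<open>finite V\<close> con \<open>chordal V E\<close> u] by blast
  have "finite (center V E)" using \<open>finite V\<close> by (simp add: center_def)
  then have "Min ((\<lambda>c. dist V E u c + ecc V E c) ` center V E) \<le> dist V E u c + ecc V E c"
    using c(1) by (intro Min_le) auto
  also have "\<dots> = dist V E u c + rad V E" using c(1) by (simp add: center_def)
  also have "\<dots> \<le> diam V E"
    using c ecc_le_diam[OF \<open>finite V\<close>, of c E] by (simp add: center_def)
  finally show "Min ((\<lambda>c. dist V E u c + ecc V E c) ` center V E) \<le> diam V E" .
qed

end
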